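(* Let $1\le l\le s+1$ and let $\beta_1<\beta_2<\dots<\beta_l$ be indices in $\{0,\dots,s\}$. Define $$\mathcal{C}_{\beta_1\cdots\beta_l}=\{c_1+c_2+\dots+c_l:\ c_i\in\mathcal{I}_{\beta_i}\setminus\{0\},\ i=1,\dots,l\}\subseteq\mathcal{R},$$ on which $\langle\rho\rangle$ acts. Then $$N_{\langle\rho\rangle}(\mathcal{C}_{\beta_1\cdots\beta_l})=\frac{\prod_{i=1}^{l}(q^{d_{\beta_i}}-1)\cdot\gcd(1+t\alpha_{\beta_1},\dots,1+t\alpha_{\beta_l},n)}{tn}.$$
   Context: Standing setup: $q$ is a prime power, $n$ a positive integer with $\gcd(n,q)=1$, $\lambda\in\mathbb{F}_q^{*}$ has multiplicative order $t$ (so $t\mid q-1$). $\mathcal{R}=\mathbb{F}_q[x]/\langle x^n-\lambda\rangle$; vectors $(c_0,\dots,c_{n-1})\in\mathbb{F}_q^n$ are identified with $c_0+c_1x+\dots+c_{n-1}x^{n-1}\in\mathcal{R}$, and a $\lambda$-constacyclic code of length $n$ is an ideal of $\mathcal{R}$. Let $\zeta$ be a primitive $tn$-th root of unity in an extension $\mathbb{F}_{q^m}$ with $\zeta^n=\lambda$, so $x^n-\lambda=\prod_{i=0}^{n-1}(x-\zeta^{1+ti})$. The set $\mathcal{S}=\{1+ti:0\le i\le n-1\}$ (residues mod $tn$) is partitioned into the distinct $q$-cyclotomic cosets modulo $tn$, $C_{1+t\alpha_j}=\{(1+t\alpha_j)q^{h}\bmod tn: h\ge 0\}$, $j=0,\dots,s$,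 with $0=\alpha_0<\alpha_1<\dots<\alpha_s\le n-1$ and $d_j=|C_{1+t\alpha_j}|$. Let $m_j(x)=\prod_{h\in C_{1+t\alpha_j}}(x-\zeta^{h})$ (irreducible over $\mathbb{F}_q$), and let $\mathcal{I}_j$ be the ideal of $\mathcal{R}$ generated by $(x^n-\lambda)/m_j(x)$; this is an irreducible $\lambda$-constacyclic code of dimension $d_j$, said to correspond to the coset $C_{1+t\alpha_j}$, and $\mathcal{R}=\mathcal{I}_0\oplus\dots\oplus\mathcal{I}_s$. The cyclic shift $\rho:\mathcal{R}\to\mathcal{R}$ is $\rho(c(x))=xc(x)$, i.e. $(c_0,\dots,c_{n-1})\mapsto(\lambda c_{n-1},c_0,\dots,c_{n-2})$; $\langle\rho\rangle$ is the cyclic group it generates, of order $tn$. For a group $G$ acting on a finite set $X$, $N_G(X)$ denotes the number of $G$-orbits on $X$. *)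

theory Defs
  imports "HOL-Computational_Algebra.Polynomial"
begin

definition is_field_emb :: "('a::field \<Rightarrow> 'b::field) \<Rightarrow> bool" where
  "is_field_emb e \<longleftrightarrow> e 1 = 1 \<and> (\<forall>x y. e (x + y) = e x + e y) \<and> (\<forall>x y. e (x * y) = e x * e y)"

definition mult_order :: "'a::field \<Rightarrow> nat" where
  "mult_order a = (LEAST k. 0 < k \<and> a ^ k = 1)"

definition cyc_coset :: "nat \<Rightarrow> nat \<Rightarrow> nat \<Rightarrow> nat set" where
  "cyc_coset q m e = {(e * q ^ h) mod m | h. True}"

definition S_set :: "nat \<Rightarrow> nat \<Rightarrow> nat set" where
  "S_set t n = {(1 + t * i) mod (t * n) | i. i < n}"

text \<open>The alpha's: alpha_j is the smallest i with 1+ti in the j-th coset; these are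
  listed increasingly as alpha_0 = 0 < alpha_1 < ... < alpha_s.\<close>
definition alpha_set :: "nat \<Rightarrow> nat \<Rightarrow> nat \<Rightarrow> nat set" where
  "alpha_set q t n = {a. a < n \<and> (\<forall>b<a. (1 + t * b) mod (t * n) \<notin> cyc_coset q (t * n) (1 + t * a))}"

definition alpha :: "nat \<Rightarrow> nat \<Rightarrow> nat \<Rightarrow> nat \<Rightarrow> nat" where
  "alpha q t n j = sorted_list_of_set (alpha_set q t n) ! j"

text \<open>s = (number of cosets) - 1.\<close>
definition s_idx :: "nat \<Rightarrow> nat \<Rightarrow> nat \<Rightarrow> nat" where
  "s_idx q t n = card (alpha_set q t n) - 1"

definition d_dim :: "nat \<Rightarrow> nat \<Rightarrow> nat \<Rightarrow> nat \<Rightarrow> nat" where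
  "d_dim q t n j = card (cyc_coset q (t * n) (1 + t * alpha q t n j))"

definition m_poly :: "nat \<Rightarrow> nat \<Rightarrow> nat \<Rightarrow> 'b::field \<Rightarrow> nat \<Rightarrow> 'b poly" where
  "m_poly q t n \<zeta> j = (\<Prod>h\<in>cyc_coset q (t * n) (1 + t * alpha q t n j). [:- (\<zeta> ^ h), 1:])"

definition gen_poly :: "('a::field \<Rightarrow> 'b::field) \<Rightarrow> nat \<Rightarrow> nat \<Rightarrow> nat \<Rightarrow> 'a \<Rightarrow> 'b \<Rightarrow> nat \<Rightarrow> 'a poly" where
  "gen_poly e q t n lam \<zeta> j =
     (SOME g. map_poly e g = map_poly e (monom 1 n - [:lam:]) div m_poly q t n \<zeta> j)"

text \<open>The ambient ring R = F_q[x]/(x^n - lambda): elements are represented by polynomials of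
  degree < n (the reduced representatives).\<close>
definition R_mod :: "nat \<Rightarrow> 'a::field \<Rightarrow> 'a poly \<Rightarrow> 'a poly" where
  "R_mod n lam c = c mod (monom 1 n - [:lam:])"

definition irr_code :: "('a::field \<Rightarrow> 'b::field) \<Rightarrow> nat \<Rightarrow> nat \<Rightarrow> nat \<Rightarrow> 'a \<Rightarrow> 'b \<Rightarrow> nat \<Rightarrow> 'a poly set" where
  "irr_code e q t n lam \<zeta> j = {R_mod n lam (gen_poly e q t n lam \<zeta> j * a) | a. True}"

definition rho :: "nat \<Rightarrow> 'a::field \<Rightarrow> 'a poly \<Rightarrow> 'a poly" where
  "rho n lam c = R_mod n lam (monom 1 1 * c)"

definition num_orbits :: "('x \<Rightarrow> 'x) \<Rightarrow> 'x set \<Rightarrow> nat" where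
  "num_orbits f X = card ((\<lambda>x. {(f ^^ k) x | k. True}) ` X)"

end

theory Submission
  imports Defs "HOL-Library.Cardinality" "Jordan_Normal_Form.Char_Poly" "HOL-Algebra.Sylow" "HOL-Number_Theory.Number_Theory"
begin

text \<open>
  Evaluating at the roots \<open>\<zeta>\<^sup>h\<close>, \<open>h \<in> S\<close>, of \<open>x\<^sup>n - \<lambda>\<close> identifies \<open>\<R>\<close> with the functions on \<open>S\<close>
  (a polynomial of degree \<open>< n\<close> is determined by these \<open>n\<close> values). Under this transform \<open>\<I>\<^sub>j\<close>
  consists of functions supported on the coset \<open>C\<^sub>1\<^sub>+\<^sub>t\<^sub>\<alpha>\<^sub>j\<close>, and \<open>\<rho>\<close> multiplies the value at
  \<open>\<zeta>\<^sup>h\<close> by \<open>\<zeta>\<^sup>h\<close>. The support of \<open>x = c\<^sub>1 + \<dots> + c\<^sub>l\<close> with nonzero \<open>c\<^sub>i \<in> \<I>\<^sub>\<beta>\<^sub>i\<close> meets each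
  of the cosets of the \<open>\<beta>\<^sub>i\<close> and no other one, so \<open>\<rho>\<^sup>k x = x\<close> iff \<open>tn\<close> divides \<open>(1 + t\<alpha>\<^sub>\<beta>\<^sub>i) k\<close>
  for all \<open>i\<close> (\<open>q\<close> being a unit modulo \<open>tn\<close>), i.e. iff \<open>tn/g\<close> divides \<open>k\<close>, where
  \<open>g = gcd(1 + t\<alpha>\<^sub>\<beta>\<^sub>1, \<dots>, 1 + t\<alpha>\<^sub>\<beta>\<^sub>l, tn) = gcd(1 + t\<alpha>\<^sub>\<beta>\<^sub>1, \<dots>, 1 + t\<alpha>\<^sub>\<beta>\<^sub>l, n)\<close>.
  Hence every orbit has exactly \<open>tn/g\<close> elements, while the decomposition of \<open>x\<close> is unique,
  so that there are \<open>\<Prod>\<^sub>i (q ^ d\<^sub>\<beta>\<^sub>i - 1)\<close> elements. Counting \<open>\<I>\<^sub>j\<close> needs the generator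
  \<open>(x\<^sup>n - \<lambda>)/m\<^sub>j\<close> to have coefficients in \<open>F\<^sub>q\<close>: its roots are permuted by the \<open>q\<close>-Frobenius.
\<close>

hide_const (open) UnivPoly.up_ring.monom UnivPoly.up_ring.coeff

section \<open>Finite fields\<close>

lemma power_card_eq_self:
  fixes x :: "'a::{field,finite}"
  shows "x ^ CARD('a) = x"
proof (cases "x = 0")
  case True
  then show ?thesis by simp
next
  case False
  define U where "U = UNIV - {0 :: 'a}"
  have "(\<Prod>y\<in>U. x * y) = \<Prod>U"
    unfolding U_def by (rule prod.reindex_bij_witness[of _ "\<lambda>y. y / x" "\<lambda>y. x * y"]) (use False in auto)
  then have "x ^ card U * \<Prod>U = 1 * \<Prod>U"
    by (simp only: prod.distrib prod_constant mult_1)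
  moreover have "\<Prod>U \<noteq> 0"
    by (simp add: U_def)
  ultimately have "x ^ card U = 1"
    using mult_right_cancel by blast
  moreover have "CARD('a) = Suc (card U)"
    unfolding U_def using card_Suc_Diff1[of "UNIV :: 'a set" 0] by simp
  ultimately show ?thesis
    by (simp only: power_Suc2 mult_1)
qed

lemma prime_dvd_card_imp_eq_CHAR:
  assumes "prime r" and "r dvd CARD('a::{field,finite})"
  shows "r = CHAR('a)"
proof -
  define G :: "'a monoid" where "G = \<lparr>carrier = UNIV, mult = (+), one = 0\<rparr>"
  have "group G"
    unfolding G_def by (rule groupI) (auto simp: add.assoc intro: exI[of _ "- _"])
  moreover have "order G = r ^ 1 * (CARD('a) div r)"
    using assms by (simp add: order_def G_def)
  ultimately obtain H where H: "subgroup H G" "card H = r"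
    using sylow_thm[OF assms(1)] by (fastforce simp: G_def)
  then have "finite H" "card H > 1"
    using assms(1) prime_gt_1_nat card.infinite by fastforce+
  then have "\<not> H \<subseteq> {0}"
    using card_mono[of "{0}" H] by auto
  then obtain x where x: "x \<in> H" "x \<noteq> 0"
    by blast
  have closed: "a + b \<in> H" if "a \<in> H" "b \<in> H" for a b
    using subgroup.m_closed[OF H(1)] that by (simp add: G_def)
  have "inv\<^bsub>G\<^esub> x = - x"
    by (rule group.inv_equality[OF \<open>group G\<close>]) (auto simp: G_def)
  then have "- x \<in> H"
    using subgroup.m_inv_closed[OF H(1) x(1)] by simp
  then have closed_diff: "a - x \<in> H" if "a \<in> H" for a
    using closed[OF that] diff_conv_add_uminus by metis
  txt \<open>Translation by \<open>x\<close> permutes \<open>H\<close>, so summing over \<open>H\<close> gives \<open>r \<cdot> x = 0\<close>.\<close>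
  have "(\<Sum>y\<in>H. y + x) = (\<Sum>y\<in>H. y)"
    by (rule sum.reindex_bij_witness[of _ "\<lambda>y. y + - x" "\<lambda>y. y + x"])
       (use closed closed_diff x in auto)
  then have "of_nat r * x = 0"
    by (simp add: sum.distrib H(2))
  then have "CHAR('a) dvd r"
    using x(2) by (simp add: of_nat_eq_0_iff_char_dvd)
  then have "CHAR('a) = 1 \<or> CHAR('a) = r"
    using assms(1) unfolding prime_nat_iff by blast
  then show ?thesis
    by simp
qed

lemma prime_CHAR_finite_field: "prime CHAR('a::{field,finite})"
  using prime_CHAR_semidom finite_imp_CHAR_pos[where 'a = 'a] by simp

lemma card_eq_CHAR_power: "\<exists>k. CARD('a::{field,finite}) = CHAR('a) ^ k"
proof (rule ccontr)
  assume "\<nexists>k. CARD('a) = CHAR('a) ^ k"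
  then obtain r where "r \<in> prime_factors CARD('a)" "r \<noteq> CHAR('a)"
    using Ex_other_prime_factor[of "CARD('a)" "CHAR('a)"] prime_CHAR_finite_field by auto
  then show False
    using prime_dvd_card_imp_eq_CHAR[of r] by (auto simp: in_prime_factors_iff)
qed

lemma field_hom_if_is_field_emb: "is_field_emb e \<Longrightarrow> field_hom e"
proof -
  assume "is_field_emb e"
  then have hom: "e 1 = 1" "\<And>x y. e (x + y) = e x + e y" "\<And>x y. e (x * y) = e x * e y"
    by (auto simp: is_field_emb_def)
  moreover have "e 0 = 0"
    using hom(2)[of 0 0] by (metis add_cancel_right_right)
  ultimately show "field_hom e"
    by unfold_locales auto
qed

lemma (in field_hom) CHAR_eq: "CHAR('b) = CHAR('a)"
  by (rule CHAR_eqI) (simp_all add: of_nat_eq_0_iff_char_dvd flip: hom_of_nat)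

lemma power_card_add:
  fixes e :: "'a::{field,finite} \<Rightarrow> 'b::field" and x y :: 'b
  assumes "field_hom e"
  shows "(x + y) ^ CARD('a) = x ^ CARD('a) + y ^ CARD('a)"
proof -
  have char: "CHAR('b) = CHAR('a)"
    using field_hom.CHAR_eq[OF assms] .
  obtain k where "CARD('a) = CHAR('b) ^ k"
    using card_eq_CHAR_power[where 'a = 'a] char by auto
  moreover have "prime CHAR('b)"
    using prime_CHAR_finite_field[where 'a = 'a] char by simp
  ultimately show ?thesis
    by (rule freshmans_dream'[rotated])
qed

lemma power_card_fixed_imp_in_range:
  fixes e :: "'a::{field,finite} \<Rightarrow> 'b::field" and y :: 'b
  assumes "field_hom e" and "y ^ CARD('a) = y"
  shows "y \<in> range e"
proof (rule ccontr)
  interpret field_hom e by fact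
  assume y: "y \<notin> range e"
  let ?p = "monom (1::'b) CARD('a) + [:0, -1:]"
  have "card {0::'a, 1} \<le> CARD('a)"
    by (rule card_mono) simp_all
  then have deg: "degree ?p = CARD('a)"
    by (subst degree_add_eq_left) (simp_all add: degree_monom_eq)
  then have "?p \<noteq> 0"
    using \<open>card {0::'a, 1} \<le> CARD('a)\<close> by auto
  have "e a ^ CARD('a) = e a" for a
    by (simp add: power_card_eq_self flip: hom_power)
  then have "insert y (range e) \<subseteq> {z. poly ?p z = 0}"
    using assms(2) by (auto simp: poly_monom)
  then have "card (insert y (range e)) \<le> card {z. poly ?p z = 0}"
    by (intro card_mono poly_roots_finite \<open>?p \<noteq> 0\<close>)
  also have "\<dots> \<le> CARD('a)"
    using card_poly_roots_bound[OF \<open>?p \<noteq> 0\<close>] deg by simp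
  finally have "card (insert y (range e)) \<le> CARD('a)" .
  moreover have "card (range e) = CARD('a)"
    using card_image[OF inj_f] by simp
  ultimately show False
    using y by simp
qed

lemma map_poly_exists_preimage_if_power_card_fixed:
  fixes e :: "'a::{field,finite} \<Rightarrow> 'b::field" and p :: "'b poly"
  assumes "field_hom e" and "\<And>i. coeff p i ^ CARD('a) = coeff p i"
  shows "\<exists>g. map_poly e g = p"
proof -
  interpret field_hom e by fact
  have "inv_into UNIV e 0 = 0"
    using inv_f_f[of 0] by simp
  then have "map_poly e (map_poly (inv_into UNIV e) p) = p"
    using power_card_fixed_imp_in_range[OF assms(1,2)]
    by (intro poly_eqI) (simp add: coeff_map_poly f_inv_into_f)
  then show ?thesis ..
qed

section \<open>Multiplicative order\<close>

lemma mult_order_pos_and_power_eq_1_iff: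
  fixes x :: "'a::field"
  assumes "x ^ m = 1" and "0 < m"
  shows "0 < mult_order x" and "x ^ k = 1 \<longleftrightarrow> mult_order x dvd k"
proof -
  have ord: "0 < mult_order x \<and> x ^ mult_order x = 1"
    unfolding mult_order_def by (rule LeastI[of _ m]) (use assms in simp)
  then show "0 < mult_order x"
    by simp
  show "x ^ k = 1 \<longleftrightarrow> mult_order x dvd k"
  proof
    assume "x ^ k = 1"
    have "x ^ k = (x ^ mult_order x) ^ (k div mult_order x) * x ^ (k mod mult_order x)"
      by (simp flip: power_mult power_add)
    then have "x ^ (k mod mult_order x) = 1"
      using \<open>x ^ k = 1\<close> ord by simp
    moreover have "k mod mult_order x < mult_order x"
      using ord by simp
    ultimately show "mult_order x dvd k"
      using not_less_Least[of "k mod mult_order x" "\<lambda>k. 0 < k \<and> x ^ k = 1"]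
      unfolding mult_order_def by auto
  qed (use ord in \<open>auto simp: power_mult\<close>)
qed

lemma power_eq_power_iff_cong_mult_order:
  fixes x :: "'a::field"
  assumes "x ^ m = 1" and "0 < m"
  shows "x ^ a = x ^ b \<longleftrightarrow> [a = b] (mod mult_order x)"
proof -
  have "x \<noteq> 0"
    using assms by (cases "x = 0") (simp_all add: power_0_left)
  have *: "x ^ a = x ^ b \<longleftrightarrow> [a = b] (mod mult_order x)" if "a \<le> b" for a b
  proof -
    have "x ^ b = x ^ a * x ^ (b - a)"
      using that by (simp flip: power_add)
    then have "x ^ a = x ^ b \<longleftrightarrow> x ^ (b - a) = 1"
      using \<open>x \<noteq> 0\<close> by auto
    also have "\<dots> \<longleftrightarrow> mult_order x dvd b - a"
      by (rule mult_order_pos_and_power_eq_1_iff(2)[OF assms])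
    also have "\<dots> \<longleftrightarrow> [a = b] (mod mult_order x)"
      using that by (simp add: cong_def mod_eq_dvd_iff_nat eq_commute[of "a mod _"])
    finally show ?thesis .
  qed
  show ?thesis
  proof (cases "a \<le> b")
    case False
    then show ?thesis
      using *[of b a] cong_sym_eq by (metis nle_le)
  qed (rule *)
qed

lemma mult_order_eqI:
  fixes x :: "'a::field"
  assumes "0 < m" and "x ^ m = 1" and "\<And>k. 0 < k \<Longrightarrow> k < m \<Longrightarrow> x ^ k \<noteq> 1"
  shows "mult_order x = m"
  unfolding mult_order_def
  by (rule Least_equality) (use assms not_less in blast)+

section \<open>Cyclotomic cosets\<close>

lemma cyc_coset_iff: "y \<in> cyc_coset q N x \<longleftrightarrow> (\<exists>h. y = x * q ^ h mod N)"
  by (auto simp: cyc_coset_def)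

lemma cyc_coset_subset_lessThan: "0 < N \<Longrightarrow> cyc_coset q N x \<subseteq> {..<N}"
  by (auto simp: cyc_coset_iff)

lemma finite_cyc_coset: "0 < N \<Longrightarrow> finite (cyc_coset q N x)"
  by (rule finite_subset[OF cyc_coset_subset_lessThan]) simp_all

lemma mod_in_cyc_coset: "x mod N \<in> cyc_coset q N x"
  unfolding cyc_coset_iff by (rule exI[of _ 0]) simp

lemma cyc_coset_mod: "cyc_coset q N (x mod N) = cyc_coset q N x"
  by (simp add: cyc_coset_def mod_mult_left_eq)

lemma mult_power_mod_in_cyc_coset:
  assumes "y \<in> cyc_coset q N x"
  shows "y * q ^ k mod N \<in> cyc_coset q N x"
proof -
  obtain h where "y = x * q ^ h mod N"
    using assms by (auto simp: cyc_coset_iff)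
  then have "y * q ^ k mod N = x * q ^ (h + k) mod N"
    by (simp add: mod_mult_left_eq power_add mult.assoc)
  then show ?thesis
    by (auto simp: cyc_coset_iff)
qed

lemma mult_mod_in_cyc_coset: "x * q mod N \<in> cyc_coset q N x"
  unfolding cyc_coset_iff by (rule exI[of _ 1]) simp

lemma cyc_coset_subset:
  assumes "y \<in> cyc_coset q N x"
  shows "cyc_coset q N y \<subseteq> cyc_coset q N x"
proof
  fix z assume "z \<in> cyc_coset q N y"
  then obtain k where "z = y * q ^ k mod N"
    by (auto simp: cyc_coset_iff)
  then show "z \<in> cyc_coset q N x"
    using mult_power_mod_in_cyc_coset[OF assms] by simp
qed

lemma cyc_coset_eq:
  assumes "coprime q N" and "0 < N" and "y \<in> cyc_coset q N x"
  shows "cyc_coset q N y = cyc_coset q N x"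
proof
  show "cyc_coset q N y \<subseteq> cyc_coset q N x"
    using assms(3) by (rule cyc_coset_subset)
  obtain h where h: "y = x * q ^ h mod N"
    using assms(3) by (auto simp: cyc_coset_iff)
  txt \<open>Euler's theorem lets us go back from \<open>y\<close> to \<open>x\<close> by a further power of \<open>q\<close>.\<close>
  have "[q ^ (totient N * h) = 1 ^ h] (mod N)"
    unfolding power_mult by (rule cong_pow[OF euler_theorem[OF assms(1)]])
  then have "[x * q ^ (totient N * h) = x * 1] (mod N)"
    by (intro cong_mult cong_refl) simp
  moreover have "totient N * h = h + h * (totient N - 1)"
    using assms(2) by (cases "totient N") simp_all
  ultimately have "x mod N = y * q ^ (h * (totient N - 1)) mod N"
    unfolding h by (simp add: cong_def mod_mult_left_eq power_add mult.assoc)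
  then have "x mod N \<in> cyc_coset q N y"
    by (auto simp: cyc_coset_iff)
  then show "cyc_coset q N x \<subseteq> cyc_coset q N y"
    using cyc_coset_subset cyc_coset_mod by metis
qed

lemma cyc_cosets_disjoint:
  assumes "coprime q N" and "0 < N" and "cyc_coset q N x \<noteq> cyc_coset q N y"
  shows "cyc_coset q N x \<inter> cyc_coset q N y = {}"
  using cyc_coset_eq[OF assms(1,2)] assms(3) by blast

lemma dvd_mult_iff_cyc_coset:
  assumes "coprime q N" and "y \<in> cyc_coset q N x"
  shows "N dvd y * k \<longleftrightarrow> N dvd x * k"
proof -
  obtain h where "y = x * q ^ h mod N"
    using assms(2) by (auto simp: cyc_coset_iff)
  then have "y * k mod N = q ^ h * (x * k) mod N"
    by (simp only: mod_mult_left_eq) (simp add: ac_simps)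
  then have "N dvd y * k \<longleftrightarrow> N dvd q ^ h * (x * k)"
    by (simp add: dvd_eq_mod_eq_0)
  also have "\<dots> \<longleftrightarrow> N dvd x * k"
    using assms(1) by (simp add: coprime_dvd_mult_right_iff coprime_commute)
  finally show ?thesis .
qed

lemma bij_betw_mult_mod_union_cyc_cosets:
  assumes "coprime q N" and "0 < N" and "B \<subseteq> {..<N}" and "\<And>y. y \<in> B \<Longrightarrow> cyc_coset q N y \<subseteq> B"
  shows "bij_betw (\<lambda>h. h * q mod N) B B"
proof -
  have "inj_on (\<lambda>h. h * q mod N) B"
  proof (rule inj_onI)
    fix a b assume "a \<in> B" "b \<in> B" "a * q mod N = b * q mod N"
    then have "[a = b] (mod N)"
      using cong_mult_rcancel_nat[OF assms(1)] by (simp add: cong_def)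
    with \<open>a \<in> B\<close> \<open>b \<in> B\<close> assms(3) show "a = b"
      by (auto simp: cong_def subset_iff)
  qed
  moreover have "h * q mod N \<in> B" if "h \<in> B" for h
    using assms(4) that mult_mod_in_cyc_coset by blast
  moreover have "finite B"
    using assms(3) by (rule finite_subset) simp
  ultimately show ?thesis
    by (simp add: bij_betw_def endo_inj_surj image_subsetI)
qed

lemma S_set_eq:
  assumes "0 < t"
  shows "S_set t n = {x. x < t * n \<and> [x = 1] (mod t)}"
proof (rule subset_antisym; rule subsetI)
  fix x assume "x \<in> S_set t n"
  then obtain i where i: "i < n" "x = (1 + t * i) mod (t * n)"
    by (auto simp: S_set_def)
  then have "x < t * n"
    using assms by simp
  moreover have "[x = 1 + t * i] (mod t)"
    unfolding i(2) cong_def by (simp add: mod_mod_cancel)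
  moreover have "[1 + t * i = 1] (mod t)"
    unfolding cong_def by (rule mod_mult_self2)
  ultimately show "x \<in> {x. x < t * n \<and> [x = 1] (mod t)}"
    using cong_trans by blast
next
  fix x assume "x \<in> {x. x < t * n \<and> [x = 1] (mod t)}"
  then have x: "x < t * n" "[x = 1] (mod t)"
    by auto
  obtain i where "x = (1 + t * i) mod (t * n)" "i < n"
  proof (cases "x = 0")
    case True
    with x have "t = 1" "0 < n"
      using cong_0_1_nat by auto
    with True show ?thesis
      using that[of "n - 1"] by simp
  next
    case False
    then have "\<exists>i. x = i * t + 1"
      using cong_le_nat[of 1 x t] x(2) by simp
    then obtain i where i: "x = 1 + t * i"
      by (auto simp: ac_simps)
    with x(1) have "t * i < t * n"
      by linarith
    with i x(1) show ?thesis
      using that[of i] by simp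
  qed
  then show "x \<in> S_set t n"
    unfolding S_set_def by blast
qed

lemma card_S_set:
  assumes "0 < t"
  shows "card (S_set t n) = n"
proof -
  have le_imp_eq: "i = j"
    if "i \<le> j" "j < n" "(1 + t * i) mod (t * n) = (1 + t * j) mod (t * n)" for i j
  proof -
    have "t * n dvd t * (j - i)"
      using that mod_eq_dvd_iff_nat[of "1 + t * i" "1 + t * j" "t * n"]
      by (simp add: diff_mult_distrib2)
    then have "n dvd j - i"
      using assms by simp
    moreover have "j - i < n"
      using that(2) by linarith
    ultimately have "\<not> 0 < j - i"
      using nat_dvd_not_less by blast
    with that(1) show "i = j"
      by simp
  qed
  have "inj_on (\<lambda>i. (1 + t * i) mod (t * n)) {..<n}"
  proof (rule inj_onI)
    fix i j assume "i \<in> {..<n}" "j \<in> {..<n}" "(1 + t * i) mod (t * n) = (1 + t * j) mod (t * n)"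
    then show "i = j"
      using le_imp_eq[of i j] le_imp_eq[of j i] by (cases "i \<le> j") auto
  qed
  moreover have "S_set t n = (\<lambda>i. (1 + t * i) mod (t * n)) ` {..<n}"
    by (auto simp: S_set_def)
  ultimately show ?thesis
    by (simp add: card_image)
qed

lemma cyc_coset_subset_S_set:
  assumes "0 < t" and "0 < n" and "[q = 1] (mod t)" and "[x = 1] (mod t)"
  shows "cyc_coset q (t * n) x \<subseteq> S_set t n"
proof
  fix y assume "y \<in> cyc_coset q (t * n) x"
  then obtain h where h: "y = x * q ^ h mod (t * n)"
    by (auto simp: cyc_coset_iff)
  have "[x * q ^ h = 1 * 1 ^ h] (mod t)"
    using assms(3,4) by (intro cong_mult cong_pow)
  then have "[y = 1] (mod t)"
    unfolding h by (simp add: cong_def mod_mod_cancel)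
  with h assms(1,2) show "y \<in> S_set t n"
    by (simp add: S_set_eq)
qed

lemma cong_1_plus_t: "[1 + t * a = 1] (mod (t::nat))"
  unfolding cong_def by (rule mod_mult_self2)

lemma coprime_1_plus_t: "coprime (1 + t * a) (t::nat)"
proof -
  have "gcd t (a * t + 1) = gcd t 1"
    by (rule gcd_add_mult)
  then have "coprime t (a * t + 1)"
    by (simp only: coprime_iff_gcd_eq_1 gcd_1_nat)
  moreover have "a * t + 1 = 1 + t * a"
    by simp
  ultimately show ?thesis
    by (simp only: coprime_commute[of t])
qed

lemma dvd_all_mult_iff_dvd_div_Gcd:
  fixes N k :: nat
  assumes "0 < N"
  shows "(\<forall>a\<in>A. N dvd a * k) \<longleftrightarrow> N div Gcd (insert N A) dvd k"
proof -
  define g where "g = Gcd (insert N A)"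
  have "g dvd N"
    by (simp add: g_def)
  then obtain N' where N': "N = g * N'"
    by blast
  then have "0 < g" and "N div g = N'"
    using assms by auto
  have "(\<forall>a\<in>A. N dvd a * k) \<longleftrightarrow> (\<forall>a\<in>insert N A. N dvd k * a)"
    by (simp add: mult.commute)
  also have "\<dots> \<longleftrightarrow> N dvd Gcd ((*) k ` insert N A)"
    by (simp add: dvd_Gcd_iff)
  also have "Gcd ((*) k ` insert N A) = g * k"
    unfolding g_def Gcd_mult by (simp add: mult.commute)
  also have "N dvd g * k \<longleftrightarrow> N' dvd k"
    unfolding N' using \<open>0 < g\<close> by simp
  finally show ?thesis
    unfolding g_def[symmetric] \<open>N div g = N'\<close> .
qed

lemma Gcd_insert_mult_coprime:
  fixes t n :: nat
  assumes "a \<in> A" and "coprime a t"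
  shows "Gcd (insert (t * n) A) = Gcd (insert n A)"
proof -
  have "coprime (Gcd A) t"
    using assms by (meson Gcd_dvd coprime_divisors dvd_refl)
  then show ?thesis
    by (simp add: gcd_mult_left_left_cancel)
qed

section \<open>Polynomials\<close>

definition root_poly :: "'a::comm_ring_1 \<Rightarrow> nat set \<Rightarrow> 'a poly" where
  "root_poly \<zeta> B = (\<Prod>h\<in>B. [:- (\<zeta> ^ h), 1:])"

lemma root_poly_nonzero: "root_poly (\<zeta> :: 'a::idom) B \<noteq> 0"
  by (cases "finite B") (auto simp: root_poly_def)

lemma degree_root_poly: "finite B \<Longrightarrow> degree (root_poly (\<zeta> :: 'a::idom) B) = card B"
  unfolding root_poly_def by (subst degree_prod_eq_sum_degree) auto

lemma lead_coeff_root_poly: "lead_coeff (root_poly (\<zeta> :: 'a::idom) B) = 1"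
  unfolding root_poly_def lead_coeff_prod by simp

lemma poly_root_poly_eq_0: "finite B \<Longrightarrow> h \<in> B \<Longrightarrow> poly (root_poly \<zeta> B) (\<zeta> ^ h) = 0"
  unfolding root_poly_def poly_prod by (rule prod_zero) auto

lemma root_poly_diff:
  "finite B \<Longrightarrow> A \<subseteq> B \<Longrightarrow> root_poly \<zeta> A * root_poly \<zeta> (B - A) = root_poly \<zeta> B"
  unfolding root_poly_def by (simp add: prod.subset_diff[of A B] mult.commute)

lemma map_poly_root_poly:
  assumes "comm_ring_hom \<phi>"
  shows "map_poly \<phi> (root_poly \<zeta> B) = root_poly (\<phi> \<zeta>) B"
proof -
  interpret comm_ring_hom \<phi> by fact
  interpret P: map_poly_comm_ring_hom \<phi> ..
  show ?thesis
    by (simp add: root_poly_def P.hom_prod P.map_poly_pCons_hom hom_power hom_uminus)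
qed

lemma root_poly_power_eq:
  assumes "\<zeta> ^ N = 1" and "bij_betw (\<lambda>h. h * q mod N) B B"
  shows "root_poly (\<zeta> ^ q) B = root_poly \<zeta> B"
proof -
  have "(\<zeta> ^ q) ^ h = \<zeta> ^ (h * q mod N)" for h
  proof -
    have "(\<zeta> ^ q) ^ h = \<zeta> ^ (N * (h * q div N) + h * q mod N)"
      by (metis mult.commute power_mult mult_div_mod_eq)
    also have "\<dots> = \<zeta> ^ (h * q mod N)"
      by (simp only: power_add power_mult assms(1) power_one mult_1)
    finally show ?thesis .
  qed
  then have "root_poly (\<zeta> ^ q) B = (\<Prod>h\<in>B. [:- (\<zeta> ^ (h * q mod N)), 1:])"
    by (simp only: root_poly_def)
  also have "\<dots> = root_poly \<zeta> B"
    unfolding root_poly_def by (rule prod.reindex_bij_betw[OF assms(2)])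
  finally show ?thesis .
qed

lemma root_poly_exists_preimage:
  fixes e :: "'a::{field,finite} \<Rightarrow> 'b::field" and \<zeta> :: 'b
  assumes "field_hom e" and "\<zeta> ^ N = 1" and "bij_betw (\<lambda>h. h * CARD('a) mod N) B B"
  shows "\<exists>g. map_poly e g = root_poly \<zeta> B"
proof (rule map_poly_exists_preimage_if_power_card_fixed[OF assms(1)])
  let ?frob = "\<lambda>y::'b. y ^ CARD('a)"
  have "comm_ring_hom ?frob"
    by unfold_locales (simp_all add: power_card_add[OF assms(1)] power_mult_distrib)
  then have "map_poly ?frob (root_poly \<zeta> B) = root_poly \<zeta> B"
    using root_poly_power_eq[OF assms(2,3)] by (simp add: map_poly_root_poly)
  then show "coeff (root_poly \<zeta> B) i ^ CARD('a) = coeff (root_poly \<zeta> B) i" for i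
    by (metis coeff_map_poly zero_power finite_UNIV_card_ge_0 finite)
qed

lemma card_polys_degree_less:
  assumes "0 < d"
  shows "card {p :: 'a::{zero,finite} poly. degree p < d} = CARD('a) ^ d"
  using assms
proof (induction d rule: nat_induct_non_zero)
  case 1
  have "{p :: 'a poly. degree p < 1} = range (\<lambda>a. [:a:])"
    by (auto dest: degree_0_id[symmetric])
  then show ?case
    by (simp add: card_image inj_on_def)
next
  case (Suc d)
  have "{p :: 'a poly. degree p < Suc d} = (\<lambda>(a, p). pCons a p) ` (UNIV \<times> {p. degree p < d})"
  proof (intro subset_antisym subsetI)
    fix r :: "'a poly"
    assume "r \<in> {p. degree p < Suc d}"
    with Suc.hyps show "r \<in> (\<lambda>(a, p). pCons a p) ` (UNIV \<times> {p. degree p < d})"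
      by (cases r) (auto simp: image_iff split: if_splits)
  qed (use Suc.hyps in auto)
  moreover have "inj_on (\<lambda>(a, p). pCons a p) (UNIV \<times> {p :: 'a poly. degree p < d})"
    by (auto simp: inj_on_def)
  ultimately show ?case
    using Suc.IH by (simp add: card_image card_cartesian_product)
qed

lemma mult_mod_image_eq:
  fixes g m :: "'a::field poly"
  assumes "g \<noteq> 0" and "0 < degree m"
  shows "{g * a mod (g * m) | a. True} = (\<lambda>r. g * r) ` {r. degree r < degree m}"
proof -
  have "g * a mod (g * m) = g * (a mod m)" for a
    by (rule mod_mult_mult1)
  moreover have "m \<noteq> 0"
    using assms(2) by auto
  then have "degree (a mod m) < degree m" for a
    using assms(2) degree_mod_less'[of m a] by (cases "a mod m = 0") auto
  moreover have "r mod m = r" if "degree r < degree m" for r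
    using that by (rule mod_poly_less)
  ultimately show ?thesis
    by (auto simp: image_iff) metis
qed

lemma degree_diff_less_if_lead_coeff_eq:
  fixes p r :: "'a::comm_ring poly"
  assumes "degree p = d" and "degree r = d" and "lead_coeff p = lead_coeff r" and "0 < d"
  shows "degree (p - r) < d"
proof -
  have "coeff (p - r) i = 0" if "d \<le> i" for i
    using assms that by (cases "i = d") (auto simp: coeff_eq_0)
  then have "degree (p - r) \<le> d - 1"
    by (intro degree_le) auto
  then show ?thesis
    using assms(4) by linarith
qed

section \<open>Orbits of a periodic map\<close>

definition orbit :: "('x \<Rightarrow> 'x) \<Rightarrow> 'x \<Rightarrow> 'x set" where
  "orbit f x = {(f ^^ k) x | k. True}"

lemma num_orbits_eq: "num_orbits f X = card (orbit f ` X)"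
  unfolding num_orbits_def orbit_def ..

lemma funpow_funpow: "(f ^^ a) ((f ^^ b) x) = (f ^^ (a + b)) x"
  by (simp add: funpow_add)

lemma mem_orbit_self: "x \<in> orbit f x"
  unfolding orbit_def by (rule CollectI, rule exI[of _ 0]) simp

context
  fixes f :: "'x \<Rightarrow> 'x" and X :: "'x set" and m :: nat
  assumes maps_to: "\<And>x. x \<in> X \<Longrightarrow> f x \<in> X"
    and period_pos: "0 < m"
    and period: "\<And>x k. x \<in> X \<Longrightarrow> (f ^^ k) x = x \<longleftrightarrow> m dvd k"
begin

lemma funpow_in: "x \<in> X \<Longrightarrow> (f ^^ k) x \<in> X"
  by (induction k) (simp_all add: maps_to)

lemma orbit_subset: "x \<in> X \<Longrightarrow> orbit f x \<subseteq> X"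
  by (auto simp: orbit_def funpow_in)

lemma orbit_eq_image_lessThan:
  assumes "x \<in> X"
  shows "orbit f x = (\<lambda>k. (f ^^ k) x) ` {..<m}"
proof (rule subset_antisym; rule subsetI)
  fix y assume "y \<in> orbit f x"
  then obtain k where "y = (f ^^ k) x"
    by (auto simp: orbit_def)
  also have "\<dots> = (f ^^ (k mod m)) ((f ^^ (m * (k div m))) x)"
    by (simp add: funpow_funpow)
  also have "(f ^^ (m * (k div m))) x = x"
    using period[OF assms] by simp
  finally show "y \<in> (\<lambda>k. (f ^^ k) x) ` {..<m}"
    using period_pos by simp
qed (auto simp: orbit_def)

lemma card_orbit:
  assumes "x \<in> X"
  shows "card (orbit f x) = m"
proof -
  have le_imp_eq: "a = b" if ab: "a \<le> b" "b < m" "(f ^^ a) x = (f ^^ b) x" for a b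
  proof -
    have "(f ^^ (b - a)) ((f ^^ a) x) = (f ^^ (b - a + a)) x"
      by (rule funpow_funpow)
    also have "\<dots> = (f ^^ a) x"
      using ab(1,3) by simp
    finally have "m dvd b - a"
      using period funpow_in assms by blast
    moreover have "b - a < m"
      using ab(2) by linarith
    ultimately show "a = b"
      using ab(1) nat_dvd_not_less[of "b - a" m] by auto
  qed
  have "inj_on (\<lambda>k. (f ^^ k) x) {..<m}"
  proof (rule inj_onI)
    fix a b assume "a \<in> {..<m}" "b \<in> {..<m}" "(f ^^ a) x = (f ^^ b) x"
    then show "a = b"
      using le_imp_eq[of a b] le_imp_eq[of b a] by (cases "a \<le> b") auto
  qed
  then show ?thesis
    by (simp add: orbit_eq_image_lessThan[OF assms] card_image)
qed

lemma orbit_eq_if_mem_orbit: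
  assumes x: "x \<in> X" and y: "y \<in> orbit f x"
  shows "orbit f y = orbit f x"
proof -
  obtain a where a: "y = (f ^^ a) x"
    using y by (auto simp: orbit_def)
  have "(f ^^ (m * a - a)) y = (f ^^ (m * a)) x"
    using period_pos by (simp add: a funpow_funpow)
  also have "\<dots> = x"
    using period[OF x] by simp
  finally have x_from_y: "x = (f ^^ (m * a - a)) y"
    by simp
  show ?thesis
  proof (rule subset_antisym; rule subsetI)
    fix z assume "z \<in> orbit f y"
    then obtain k where "z = (f ^^ (k + a)) x"
      by (auto simp: orbit_def a funpow_funpow)
    then show "z \<in> orbit f x"
      by (auto simp: orbit_def)
  next
    fix z assume "z \<in> orbit f x"
    then obtain k where "z = (f ^^ (k + (m * a - a))) y"
      by (auto simp: orbit_def x_from_y funpow_funpow)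
    then show "z \<in> orbit f y"
      by (auto simp: orbit_def)
  qed
qed

lemma card_eq_num_orbits_mult:
  assumes "finite X"
  shows "card X = num_orbits f X * m"
proof -
  have union: "\<Union> (orbit f ` X) = X"
  proof (rule subset_antisym)
    show "\<Union> (orbit f ` X) \<subseteq> X"
      by (rule UN_least) (rule orbit_subset)
    show "X \<subseteq> \<Union> (orbit f ` X)"
    proof
      fix x assume "x \<in> X"
      with mem_orbit_self[of x f] show "x \<in> \<Union> (orbit f ` X)"
        by blast
    qed
  qed
  have disjoint: "O\<^sub>1 \<inter> O\<^sub>2 = {}"
    if O\<^sub>1: "O\<^sub>1 \<in> orbit f ` X" and O\<^sub>2: "O\<^sub>2 \<in> orbit f ` X" and ne: "O\<^sub>1 \<noteq> O\<^sub>2" for O\<^sub>1 O\<^sub>2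
  proof (rule ccontr)
    obtain x y where xy: "x \<in> X" "y \<in> X" "O\<^sub>1 = orbit f x" "O\<^sub>2 = orbit f y"
      using O\<^sub>1 O\<^sub>2 by blast
    assume "O\<^sub>1 \<inter> O\<^sub>2 \<noteq> {}"
    then obtain z where z: "z \<in> orbit f x" "z \<in> orbit f y"
      using xy by blast
    have "orbit f z = orbit f x" "orbit f z = orbit f y"
      using orbit_eq_if_mem_orbit[OF xy(1) z(1)] orbit_eq_if_mem_orbit[OF xy(2) z(2)] .
    with ne xy show False
      by simp
  qed
  have "m * card (orbit f ` X) = card (\<Union> (orbit f ` X))"
  proof (rule card_partition)
    show "finite (orbit f ` X)" "finite (\<Union> (orbit f ` X))"
      using assms union by simp_all
    show "\<And>c. c \<in> orbit f ` X \<Longrightarrow> card c = m"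
      using card_orbit by auto
  qed (rule disjoint)
  then show ?thesis
    by (simp add: union num_orbits_eq mult.commute)
qed

end

section \<open>Constacyclic codes\<close>

locale constacyclic =
  fixes lam :: "'a::{field,finite}" and e :: "'a \<Rightarrow> 'b::field" and \<zeta> :: 'b and q n t :: nat
  assumes q_def: "q = CARD('a)"
    and n_pos: "0 < n"
    and coprime_nq: "coprime n q"
    and lam_nz: "lam \<noteq> 0"
    and t_def: "t = mult_order lam"
    and emb: "is_field_emb e"
    and zeta_root: "\<zeta> ^ (t * n) = 1"
    and zeta_prim: "\<forall>k. 0 < k \<and> k < t * n \<longrightarrow> \<zeta> ^ k \<noteq> 1"
    and zeta_n: "\<zeta> ^ n = e lam"
begin

sublocale field_hom e
  using emb by (rule field_hom_if_is_field_emb)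

sublocale P: map_poly_inj_idom_divide_hom e ..

abbreviation "N \<equiv> t * n"
abbreviation "S \<equiv> S_set t n"
abbreviation "C j \<equiv> cyc_coset q N (1 + t * alpha q t n j)"
abbreviation "xn_minus_lam \<equiv> monom 1 n - [:lam:]"

lemma q_gt_1: "1 < q"
proof -
  have "card {0::'a, 1} \<le> CARD('a)"
    by (rule card_mono) simp_all
  then show ?thesis
    by (simp add: q_def)
qed

lemma t_pos: "0 < t" and t_dvd: "t dvd q - 1"
proof -
  have "Suc (q - 1) = q"
    using q_gt_1 by simp
  then have "lam * lam ^ (q - 1) = lam"
    using power_card_eq_self[of lam] by (metis power_Suc q_def)
  then have "lam ^ (q - 1) = 1"
    using lam_nz by simp
  then show "0 < t" "t dvd q - 1"
    unfolding t_def using mult_order_pos_and_power_eq_1_iff[of lam "q - 1"] q_gt_1 by auto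
qed

lemma q_cong_1: "[q = 1] (mod t)"
  using mod_eq_dvd_iff_nat[of 1 q t] t_dvd q_gt_1 by (simp add: cong_def)

lemma N_pos: "0 < N"
  using t_pos n_pos by simp

lemma coprime_q_N: "coprime q N"
proof -
  have "coprime q (q - 1)"
    using coprime_Suc_left_nat[of "q - 1"] q_gt_1 by simp
  then have "coprime q t"
    using t_dvd coprime_divisors dvd_refl by blast
  then show ?thesis
    using coprime_nq by (simp add: coprime_commute)
qed

lemma zeta_power_eq_iff: "\<zeta> ^ a = \<zeta> ^ b \<longleftrightarrow> [a = b] (mod N)"
proof -
  have "mult_order \<zeta> = N"
    using N_pos zeta_root zeta_prim by (intro mult_order_eqI) auto
  then show ?thesis
    using power_eq_power_iff_cong_mult_order[OF zeta_root N_pos] by simp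
qed

lemma zeta_nonzero: "\<zeta> \<noteq> 0"
  using zeta_root N_pos by (cases "\<zeta> = 0") (simp_all add: power_0_left)

lemma S_iff: "h \<in> S \<longleftrightarrow> h < N \<and> [h = 1] (mod t)"
  using S_set_eq[OF t_pos] by simp

lemma C_subset_S: "C j \<subseteq> S"
  using cyc_coset_subset_S_set[OF t_pos n_pos q_cong_1 cong_1_plus_t] .

lemma finite_C: "finite (C j)"
  using finite_cyc_coset[OF N_pos] .

lemma d_dim_pos: "0 < d_dim q t n j"
  unfolding d_dim_def using finite_C[of j] mod_in_cyc_coset[of "1 + t * alpha q t n j" N q]
  by (auto simp: card_gt_0_iff)

text \<open>This is where the minimality in the definition of the \<open>\<alpha>\<^sub>j\<close> is used.\<close>

lemma C_disjoint:
  assumes "j1 \<le> s_idx q t n" and "j2 \<le> s_idx q t n" and "j1 \<noteq> j2"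
  shows "C j1 \<inter> C j2 = {}"
proof -
  let ?A = "alpha_set q t n"
  let ?xs = "sorted_list_of_set ?A"
  have "finite ?A"
    by (rule finite_subset[of _ "{..<n}"]) (auto simp: alpha_set_def)
  moreover have "0 \<in> ?A"
    using n_pos by (simp add: alpha_set_def)
  ultimately have "j < length ?xs" if "j \<le> s_idx q t n" for j
    using that card_gt_0_iff[of ?A] by (auto simp: s_idx_def)
  then have j: "j1 < length ?xs" "j2 < length ?xs"
    using assms by auto
  then have "?xs ! j1 \<in> set ?xs" "?xs ! j2 \<in> set ?xs" "?xs ! j1 \<noteq> ?xs ! j2"
    using assms(3) nth_eq_iff_index_eq[OF distinct_sorted_list_of_set j] by auto
  then have A: "alpha q t n j1 \<in> ?A" "alpha q t n j2 \<in> ?A" "alpha q t n j1 \<noteq> alpha q t n j2"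
    using \<open>finite ?A\<close> by (simp_all add: alpha_def)
  have *: "C a \<noteq> C b" if "alpha q t n b \<in> ?A" "alpha q t n a < alpha q t n b" for a b
    using that mod_in_cyc_coset[of "1 + t * alpha q t n a" N q] unfolding alpha_set_def by auto
  from A(3) have "alpha q t n j1 < alpha q t n j2 \<or> alpha q t n j2 < alpha q t n j1"
    by arith
  then have "C j1 \<noteq> C j2"
    using *[of j2 j1] *[of j1 j2] A(1,2) by auto
  then show ?thesis
    by (rule cyc_cosets_disjoint[OF coprime_q_N N_pos])
qed

lemma field_hom_e: "field_hom e"
  using emb by (rule field_hom_if_is_field_emb)

lemma root_power_n: "h \<in> S \<Longrightarrow> (\<zeta> ^ h) ^ n = e lam"
proof -
  assume "h \<in> S"
  then have "[h * n = 1 * n] (mod N)"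
    by (simp add: S_iff cong_def mod_mult_mult2)
  then have "\<zeta> ^ (h * n) = \<zeta> ^ n"
    by (simp add: zeta_power_eq_iff)
  then show ?thesis
    by (simp add: zeta_n flip: power_mult)
qed

lemma poly_eq_0_if_vanishes_on_roots:
  assumes "degree p < n" and "\<And>h. h \<in> S \<Longrightarrow> poly p (\<zeta> ^ h) = 0"
  shows "p = 0"
proof (rule ccontr)
  assume "p \<noteq> 0"
  have "inj_on (\<lambda>h. \<zeta> ^ h) S"
    by (rule inj_onI) (auto simp: zeta_power_eq_iff S_iff cong_def)
  then have "n = card ((\<lambda>h. \<zeta> ^ h) ` S)"
    using card_S_set[OF t_pos] by (simp add: card_image)
  also have "\<dots> \<le> card {x. poly p x = 0}"
    using assms(2) by (intro card_mono poly_roots_finite \<open>p \<noteq> 0\<close>) auto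
  also have "\<dots> \<le> degree p"
    by (rule card_poly_roots_bound[OF \<open>p \<noteq> 0\<close>])
  finally show False
    using assms(1) by simp
qed

lemma degree_xn_minus_lam: "degree xn_minus_lam = n"
proof -
  have "degree (monom (1::'a) n + - [:lam:]) = n"
    using degree_add_eq_left[of "- [:lam:]" "monom (1::'a) n"] n_pos by (simp add: degree_monom_eq)
  then show ?thesis
    by (simp only: diff_conv_add_uminus)
qed

lemma lead_coeff_xn_minus_lam: "coeff xn_minus_lam n = 1"
  using n_pos by (cases n) simp_all

lemma xn_minus_lam_nonzero: "xn_minus_lam \<noteq> 0"
  using degree_xn_minus_lam n_pos by auto

lemma map_poly_xn_minus_lam: "map_poly e xn_minus_lam = monom 1 n - [:e lam:]"
  by (simp add: P.hom_minus map_poly_pCons_hom map_poly_monom)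

lemma finite_S: "finite S"
  by (rule finite_subset[of _ "{..<N}"]) (auto simp: S_iff)

lemma map_poly_xn_minus_lam_eq_root_poly: "map_poly e xn_minus_lam = root_poly \<zeta> S"
proof -
  let ?F = "map_poly e xn_minus_lam"
  have "degree (root_poly \<zeta> S) = n"
    using degree_root_poly[OF finite_S] card_S_set[OF t_pos] by simp
  moreover have "lead_coeff (root_poly \<zeta> S) = 1"
    by (rule lead_coeff_root_poly)
  moreover have "degree ?F = n" "lead_coeff ?F = 1"
    using degree_xn_minus_lam lead_coeff_xn_minus_lam by simp_all
  ultimately have "degree (?F - root_poly \<zeta> S) < n"
    using n_pos by (intro degree_diff_less_if_lead_coeff_eq) simp_all
  moreover have "poly (?F - root_poly \<zeta> S) (\<zeta> ^ h) = 0" if "h \<in> S" for h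
    using that root_power_n finite_S poly_root_poly_eq_0
    by (simp add: map_poly_xn_minus_lam poly_monom)
  ultimately show ?thesis
    using poly_eq_0_if_vanishes_on_roots by fastforce
qed

lemma bij_betw_mult_mod_S_minus_C: "bij_betw (\<lambda>h. h * q mod N) (S - C j) (S - C j)"
proof (rule bij_betw_mult_mod_union_cyc_cosets[OF coprime_q_N N_pos])
  show "S - C j \<subseteq> {..<N}"
    by (auto simp: S_iff)
next
  fix y assume y: "y \<in> S - C j"
  then have "cyc_coset q N y \<subseteq> S"
    by (intro cyc_coset_subset_S_set[OF t_pos n_pos q_cong_1]) (simp add: S_iff)
  moreover have "cyc_coset q N y \<noteq> C j"
    using y mod_in_cyc_coset[of y N q] by (auto simp: S_iff)
  then have "cyc_coset q N y \<inter> C j = {}"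
    by (rule cyc_cosets_disjoint[OF coprime_q_N N_pos])
  ultimately show "cyc_coset q N y \<subseteq> S - C j"
    by blast
qed

abbreviation "gen j \<equiv> gen_poly e q t n lam \<zeta> j"

abbreviation "min_poly j \<equiv> xn_minus_lam div gen j"

lemma map_poly_gen: "map_poly e (gen j) = root_poly \<zeta> (S - C j)"
proof -
  have "root_poly \<zeta> (C j) * root_poly \<zeta> (S - C j) = root_poly \<zeta> S"
    by (rule root_poly_diff[OF finite_S C_subset_S])
  then have "root_poly \<zeta> S div root_poly \<zeta> (C j) = root_poly \<zeta> (S - C j)"
    using root_poly_nonzero[of \<zeta> "C j"] by (metis nonzero_mult_div_cancel_left)
  then have "map_poly e xn_minus_lam div m_poly q t n \<zeta> j = root_poly \<zeta> (S - C j)"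
    by (simp only: map_poly_xn_minus_lam_eq_root_poly m_poly_def root_poly_def)
  moreover have "\<exists>g. map_poly e g = root_poly \<zeta> (S - C j)"
    using root_poly_exists_preimage[OF field_hom_e zeta_root] bij_betw_mult_mod_S_minus_C
    by (simp add: q_def)
  ultimately show ?thesis
    unfolding gen_poly_def by (metis (mono_tags, lifting) someI_ex)
qed

lemma gen_nonzero: "gen j \<noteq> 0"
  using map_poly_gen root_poly_nonzero by (metis map_poly_0)

lemma gen_mult_min_poly: "gen j * min_poly j = xn_minus_lam"
proof -
  have "map_poly e (gen j) dvd map_poly e xn_minus_lam"
    unfolding map_poly_gen map_poly_xn_minus_lam_eq_root_poly
    using root_poly_diff[OF finite_S C_subset_S, of \<zeta> j] by (metis dvd_triv_right)
  then show ?thesis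
    by (simp add: dvd_map_poly_hom_imp_dvd)
qed

lemma map_poly_min_poly: "map_poly e (min_poly j) = root_poly \<zeta> (C j)"
proof -
  have "map_poly e (min_poly j) = root_poly \<zeta> S div root_poly \<zeta> (S - C j)"
    by (simp add: map_poly_div map_poly_gen map_poly_xn_minus_lam_eq_root_poly)
  also have "\<dots> = root_poly \<zeta> (C j)"
    using root_poly_diff[OF finite_S C_subset_S, of \<zeta> j] root_poly_nonzero
    by (metis nonzero_mult_div_cancel_right)
  finally show ?thesis .
qed

lemma degree_min_poly: "degree (min_poly j) = d_dim q t n j"
proof -
  have "degree (min_poly j) = degree (map_poly e (min_poly j))"
    by simp
  also have "\<dots> = card (C j)"
    unfolding map_poly_min_poly by (rule degree_root_poly[OF finite_C])
  finally show ?thesis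
    by (simp add: d_dim_def)
qed

abbreviation "I j \<equiv> irr_code e q t n lam \<zeta> j"

lemma irr_code_eq: "I j = (\<lambda>r. gen j * r) ` {r. degree r < d_dim q t n j}"
proof -
  have "I j = {gen j * a mod (gen j * min_poly j) | a. True}"
    unfolding irr_code_def R_mod_def gen_mult_min_poly ..
  also have "\<dots> = (\<lambda>r. gen j * r) ` {r. degree r < degree (min_poly j)}"
    using gen_nonzero d_dim_pos degree_min_poly by (intro mult_mod_image_eq) simp_all
  finally show ?thesis
    by (simp add: degree_min_poly)
qed

lemma card_irr_code: "card (I j) = q ^ d_dim q t n j"
proof -
  have "inj_on (\<lambda>r. gen j * r) {r. degree r < d_dim q t n j}"
    using gen_nonzero by (auto intro: inj_onI)
  then have "card (I j) = card {r :: 'a poly. degree r < d_dim q t n j}"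
    by (simp add: irr_code_eq card_image)
  then show ?thesis
    using card_polys_degree_less[OF d_dim_pos] by (simp add: q_def)
qed

definition eval_root :: "'a poly \<Rightarrow> nat \<Rightarrow> 'b" where
  "eval_root c h = poly (map_poly e c) (\<zeta> ^ h)"

lemma eval_root_mult: "eval_root (a * b) h = eval_root a h * eval_root b h"
  by (simp add: eval_root_def P.hom_mult)

lemma eval_root_sum: "eval_root (\<Sum>i\<in>A. c i) h = (\<Sum>i\<in>A. eval_root (c i) h)"
  by (simp add: eval_root_def P.hom_sum poly_sum)

lemma eval_root_0 [simp]: "eval_root 0 h = 0"
  by (simp add: eval_root_def)

lemma eval_root_x: "eval_root (monom 1 1) h = \<zeta> ^ h"
  by (simp add: eval_root_def map_poly_monom poly_monom del: One_nat_def)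

lemma eval_root_R_mod: "h \<in> S \<Longrightarrow> eval_root (R_mod n lam c) h = eval_root c h"
proof -
  assume "h \<in> S"
  let ?p = "map_poly e c" and ?F = "map_poly e xn_minus_lam"
  have F_root: "poly ?F (\<zeta> ^ h) = 0"
    using \<open>h \<in> S\<close> finite_S by (simp add: map_poly_xn_minus_lam_eq_root_poly poly_root_poly_eq_0)
  have "poly ?p (\<zeta> ^ h) = poly (?p div ?F * ?F + ?p mod ?F) (\<zeta> ^ h)"
    by (simp only: div_mult_mod_eq)
  also have "\<dots> = poly (?p mod ?F) (\<zeta> ^ h)"
    using F_root by simp
  finally show ?thesis
    by (simp add: eval_root_def R_mod_def map_poly_mod)
qed

lemma degree_R_mod: "degree (R_mod n lam c) < n"
  using degree_mod_less[OF xn_minus_lam_nonzero, of c] degree_xn_minus_lam n_pos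
  by (auto simp: R_mod_def)

lemma eq_if_eval_root_eq:
  assumes "degree u < n" and "degree v < n" and "\<And>h. h \<in> S \<Longrightarrow> eval_root u h = eval_root v h"
  shows "u = v"
proof -
  have "map_poly e (u - v) = 0"
  proof (rule poly_eq_0_if_vanishes_on_roots)
    show "degree (map_poly e (u - v)) < n"
      using assms(1,2) by (simp add: degree_diff_less)
    show "poly (map_poly e (u - v)) (\<zeta> ^ h) = 0" if "h \<in> S" for h
      using assms(3)[OF that] by (simp add: eval_root_def P.hom_minus)
  qed
  then show ?thesis
    by simp
qed

abbreviation "\<rho> \<equiv> rho n lam"

lemma eval_root_rho: "h \<in> S \<Longrightarrow> eval_root (\<rho> c) h = \<zeta> ^ h * eval_root c h"
  unfolding rho_def by (simp only: eval_root_R_mod eval_root_mult eval_root_x)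

lemma eval_root_rho_funpow: "h \<in> S \<Longrightarrow> eval_root ((\<rho> ^^ k) c) h = \<zeta> ^ (h * k) * eval_root c h"
  by (induction k) (simp_all add: eval_root_rho power_add mult.assoc)

lemma degree_rho_funpow: "degree c < n \<Longrightarrow> degree ((\<rho> ^^ k) c) < n"
  by (cases k) (simp_all add: rho_def degree_R_mod)

lemma rho_funpow_eq_iff:
  assumes "degree c < n"
  shows "(\<rho> ^^ k) c = c \<longleftrightarrow> (\<forall>h\<in>S. eval_root c h \<noteq> 0 \<longrightarrow> N dvd h * k)"
proof -
  have zeta: "\<zeta> ^ (h * k) = 1 \<longleftrightarrow> N dvd h * k" for h
    using zeta_power_eq_iff[of "h * k" 0] by (simp add: cong_0_iff)
  have "(\<rho> ^^ k) c = c \<longleftrightarrow> (\<forall>h\<in>S. \<zeta> ^ (h * k) * eval_root c h = eval_root c h)"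
  proof
    assume "(\<rho> ^^ k) c = c"
    then show "\<forall>h\<in>S. \<zeta> ^ (h * k) * eval_root c h = eval_root c h"
      using eval_root_rho_funpow by metis
  next
    assume "\<forall>h\<in>S. \<zeta> ^ (h * k) * eval_root c h = eval_root c h"
    then show "(\<rho> ^^ k) c = c"
      by (intro eq_if_eval_root_eq[OF degree_rho_funpow[OF assms] assms]) (simp add: eval_root_rho_funpow)
  qed
  also have "\<dots> \<longleftrightarrow> (\<forall>h\<in>S. eval_root c h \<noteq> 0 \<longrightarrow> N dvd h * k)"
    by (auto simp: zeta)
  finally show ?thesis .
qed

lemma degree_irr_code: "c \<in> I j \<Longrightarrow> degree c < n"
  by (auto simp: irr_code_def degree_R_mod)

lemma zero_in_irr_code: "0 \<in> I j"
  unfolding irr_code_def R_mod_def by (auto intro: exI[of _ 0])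

lemma eval_root_irr_code_outside:
  assumes "c \<in> I j" and "h \<in> S - C j"
  shows "eval_root c h = 0"
proof -
  obtain a where a: "c = R_mod n lam (gen j * a)"
    using assms(1) by (auto simp: irr_code_def)
  have "eval_root (gen j) h = 0"
    using assms(2) finite_S by (simp add: eval_root_def map_poly_gen poly_root_poly_eq_0)
  then show ?thesis
    using assms(2) by (simp add: a eval_root_R_mod eval_root_mult)
qed

lemma irr_code_nonzero_imp_eval_root:
  assumes "c \<in> I j" and "c \<noteq> 0"
  shows "\<exists>h\<in>C j. eval_root c h \<noteq> 0"
proof (rule ccontr)
  assume "\<not> (\<exists>h\<in>C j. eval_root c h \<noteq> 0)"
  then have "eval_root c h = eval_root 0 h" if "h \<in> S" for h
    using eval_root_irr_code_outside[OF assms(1)] that by (cases "h \<in> C j") (auto simp: eval_root_def)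
  then have "c = 0"
    using degree_irr_code[OF assms(1)] n_pos by (intro eq_if_eval_root_eq) simp_all
  with assms(2) show False
    by simp
qed

lemma rho_irr_code: "c \<in> I j \<Longrightarrow> \<rho> c \<in> I j"
proof -
  assume "c \<in> I j"
  then obtain a where "c = R_mod n lam (gen j * a)"
    by (auto simp: irr_code_def)
  then have "\<rho> c = R_mod n lam (gen j * (monom 1 1 * a))"
    by (simp add: rho_def R_mod_def mod_mult_right_eq ac_simps)
  then show ?thesis
    by (auto simp: irr_code_def)
qed

lemma rho_nonzero:
  assumes "degree c < n" and "c \<noteq> 0"
  shows "\<rho> c \<noteq> 0"
proof
  assume "\<rho> c = 0"
  then have "eval_root c h = eval_root 0 h" if "h \<in> S" for h
    using eval_root_rho[OF that, of c] zeta_nonzero by simp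
  then have "c = 0"
    using assms(1) n_pos by (intro eq_if_eval_root_eq) simp_all
  with assms(2) show False
    by simp
qed

end


section \<open>Sums of nonzero codewords from distinct irreducible codes\<close>

locale constacyclic_sum = constacyclic lam e \<zeta> q n t
  for lam :: "'a::{field,finite}" and e :: "'a \<Rightarrow> 'b::field" and \<zeta> :: 'b and q n t :: nat +
  fixes l :: nat and \<beta> :: "nat \<Rightarrow> nat"
  assumes l_pos: "1 \<le> l"
    and beta_mono: "\<forall>i j. 1 \<le> i \<and> i < j \<and> j \<le> l \<longrightarrow> \<beta> i < \<beta> j"
    and beta_range: "\<forall>i. 1 \<le> i \<and> i \<le> l \<longrightarrow> \<beta> i \<le> s_idx q t n"
begin

abbreviation "K \<equiv> {1..l}"
abbreviation "g \<equiv> Gcd ((\<lambda>i. 1 + t * alpha q t n (\<beta> i)) ` K \<union> {n})"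

definition C_beta :: "'a poly set" where
  "C_beta = {(\<Sum>i=1..l. c i) | c. \<forall>i\<in>{1..l}. c i \<in> I (\<beta> i) - {0}}"

lemma beta_inj:
  assumes "i \<in> K" and "j \<in> K" and "\<beta> i = \<beta> j"
  shows "i = j"
proof (rule ccontr)
  assume "i \<noteq> j"
  then have "i < j \<or> j < i"
    by linarith
  then have "\<beta> i < \<beta> j \<or> \<beta> j < \<beta> i"
    using assms(1,2) beta_mono[rule_format, of i j] beta_mono[rule_format, of j i] by auto
  with assms(3) show False
    by simp
qed

lemma C_beta_disjoint:
  assumes "i \<in> K" and "j \<in> K" and "i \<noteq> j"
  shows "C (\<beta> i) \<inter> C (\<beta> j) = {}"
proof (rule C_disjoint)
  show "\<beta> i \<le> s_idx q t n" "\<beta> j \<le> s_idx q t n"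
    using assms(1,2) beta_range by simp_all
  show "\<beta> i \<noteq> \<beta> j"
    using assms beta_inj by blast
qed

lemma eval_root_sum_on_C:
  assumes c: "\<forall>i\<in>K. c i \<in> I (\<beta> i)" and k: "k \<in> K" and h: "h \<in> C (\<beta> k)"
  shows "eval_root (\<Sum>i\<in>K. c i) h = eval_root (c k) h"
proof -
  have "h \<in> S"
    using h C_subset_S by blast
  have "eval_root (c i) h = 0" if i: "i \<in> K - {k}" for i
  proof (rule eval_root_irr_code_outside)
    show "c i \<in> I (\<beta> i)"
      using c i by blast
    have "h \<notin> C (\<beta> i)"
      using C_beta_disjoint[of i k] i k h by blast
    with \<open>h \<in> S\<close> show "h \<in> S - C (\<beta> i)"
      by blast
  qed
  then have rest: "(\<Sum>i\<in>K - {k}. eval_root (c i) h) = 0"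
    by (rule sum.neutral[rule_format])
  have "eval_root (\<Sum>i\<in>K. c i) h = (\<Sum>i\<in>K. eval_root (c i) h)"
    by (rule eval_root_sum)
  also have "\<dots> = eval_root (c k) h + (\<Sum>i\<in>K - {k}. eval_root (c i) h)"
    using k by (simp add: sum.remove)
  also have "\<dots> = eval_root (c k) h"
    by (simp only: rest add_0_right)
  finally show ?thesis .
qed

lemma eval_root_sum_off_C:
  assumes "\<forall>i\<in>K. c i \<in> I (\<beta> i)" and "h \<in> S" and "\<forall>i\<in>K. h \<notin> C (\<beta> i)"
  shows "eval_root (\<Sum>i\<in>K. c i) h = 0"
  unfolding eval_root_sum using assms by (intro sum.neutral ballI eval_root_irr_code_outside) auto

lemma degree_sum_irr_code:
  assumes "\<forall>i\<in>K. c i \<in> I (\<beta> i)"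
  shows "degree (\<Sum>i\<in>K. c i) < n"
proof (rule degree_sum_less)
  show "degree (c i) < n" if "i \<in> K" for i
    using assms that by (intro degree_irr_code[of _ "\<beta> i"]) simp
qed (rule n_pos)

lemma C_beta_eq_image: "C_beta = (\<lambda>c. \<Sum>i\<in>K. c i) ` (\<Pi>\<^sub>E i\<in>K. I (\<beta> i) - {0})"
proof (rule subset_antisym; rule subsetI)
  fix x assume "x \<in> C_beta"
  then obtain c where "x = (\<Sum>i\<in>K. c i)" "\<forall>i\<in>K. c i \<in> I (\<beta> i) - {0}"
    by (auto simp: C_beta_def)
  then show "x \<in> (\<lambda>c. \<Sum>i\<in>K. c i) ` (\<Pi>\<^sub>E i\<in>K. I (\<beta> i) - {0})"
    by (intro image_eqI[of _ _ "restrict c K"]) auto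
qed (auto simp: C_beta_def PiE_def)

lemma finite_irr_code: "finite (I j)"
proof (rule ccontr)
  assume "infinite (I j)"
  then have "card (I j) = 0"
    by simp
  with card_irr_code[of j] q_gt_1 show False
    by simp
qed

lemma finite_C_beta: "finite C_beta"
  unfolding C_beta_eq_image by (intro finite_imageI finite_PiE) (auto intro: finite_irr_code)

lemma inj_on_sum_irr_code: "inj_on (\<lambda>c. \<Sum>i\<in>K. c i) (\<Pi>\<^sub>E i\<in>K. I (\<beta> i))"
proof (rule inj_onI)
  fix c c' assume cc: "c \<in> (\<Pi>\<^sub>E i\<in>K. I (\<beta> i))" "c' \<in> (\<Pi>\<^sub>E i\<in>K. I (\<beta> i))"
    and sums: "(\<Sum>i\<in>K. c i) = (\<Sum>i\<in>K. c' i)"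
  show "c = c'"
  proof (rule PiE_ext[OF cc])
    fix k assume k: "k \<in> K"
    then have ck: "c k \<in> I (\<beta> k)" "c' k \<in> I (\<beta> k)"
      using cc by auto
    show "c k = c' k"
    proof (rule eq_if_eval_root_eq)
      show "degree (c k) < n" "degree (c' k) < n"
        using ck by (simp_all add: degree_irr_code)
      fix h assume "h \<in> S"
      show "eval_root (c k) h = eval_root (c' k) h"
      proof (cases "h \<in> C (\<beta> k)")
        case True
        have "\<forall>i\<in>K. c i \<in> I (\<beta> i)" "\<forall>i\<in>K. c' i \<in> I (\<beta> i)"
          using cc by (auto simp: PiE_iff)
        then have "eval_root (c k) h = eval_root (\<Sum>i\<in>K. c i) h"
          "eval_root (c' k) h = eval_root (\<Sum>i\<in>K. c' i) h"
          using eval_root_sum_on_C[OF _ k True] by simp_all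
        then show ?thesis
          using sums by simp
      next
        case False
        with \<open>h \<in> S\<close> show ?thesis
          using eval_root_irr_code_outside[OF ck(1)] eval_root_irr_code_outside[OF ck(2)] by simp
      qed
    qed
  qed
qed

lemma card_C_beta: "card C_beta = (\<Prod>i=1..l. q ^ d_dim q t n (\<beta> i) - 1)"
proof -
  let ?P = "\<Pi>\<^sub>E i\<in>K. I (\<beta> i) - {0}"
  have "inj_on (\<lambda>c. \<Sum>i\<in>K. c i) ?P"
    by (rule inj_on_subset[OF inj_on_sum_irr_code]) (auto simp: PiE_iff)
  then have "card C_beta = card ?P"
    by (simp add: C_beta_eq_image card_image)
  also have "\<dots> = (\<Prod>i\<in>K. card (I (\<beta> i) - {0}))"
    by (rule card_PiE) simp
  also have "\<dots> = (\<Prod>i=1..l. q ^ d_dim q t n (\<beta> i) - 1)"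
    by (simp add: card_Diff_singleton finite_irr_code zero_in_irr_code card_irr_code)
  finally show ?thesis .
qed

lemma rho_C_beta: "x \<in> C_beta \<Longrightarrow> \<rho> x \<in> C_beta"
proof -
  assume "x \<in> C_beta"
  then obtain c where x: "x = (\<Sum>i\<in>K. c i)" and c: "\<forall>i\<in>K. c i \<in> I (\<beta> i) - {0}"
    by (auto simp: C_beta_def)
  have "\<rho> x = (\<Sum>i\<in>K. \<rho> (c i))"
  proof (rule eq_if_eval_root_eq)
    show "degree (\<rho> x) < n"
      using degree_rho_funpow[of x 1] by (simp add: rho_def degree_R_mod)
    show "degree (\<Sum>i\<in>K. \<rho> (c i)) < n"
      using c rho_irr_code by (intro degree_sum_irr_code) auto
    fix h assume "h \<in> S"
    then show "eval_root (\<rho> x) h = eval_root (\<Sum>i\<in>K. \<rho> (c i)) h"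
      by (simp add: x eval_root_rho eval_root_sum sum_distrib_left)
  qed
  moreover have "\<forall>i\<in>K. \<rho> (c i) \<in> I (\<beta> i) - {0}"
    using c rho_irr_code rho_nonzero degree_irr_code by auto
  ultimately show "\<rho> x \<in> C_beta"
    by (auto simp: C_beta_def)
qed

text \<open>The support of a sum of nonzero codewords meets each coset \<open>C\<^sub>\<beta>\<^sub>i\<close> and nothing else; since
  \<open>q\<close> is invertible modulo \<open>tn\<close>, the condition \<open>tn | h k\<close> depends only on the coset of \<open>h\<close>.\<close>

lemma support_dvd_iff:
  assumes c: "\<forall>i\<in>K. c i \<in> I (\<beta> i) - {0}"
  shows "(\<forall>h\<in>S. eval_root (\<Sum>i\<in>K. c i) h \<noteq> 0 \<longrightarrow> N dvd h * k)
    \<longleftrightarrow> (\<forall>i\<in>K. N dvd (1 + t * alpha q t n (\<beta> i)) * k)"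
proof
  have cI: "\<forall>i\<in>K. c i \<in> I (\<beta> i)"
    using c by blast
  assume H: "\<forall>h\<in>S. eval_root (\<Sum>i\<in>K. c i) h \<noteq> 0 \<longrightarrow> N dvd h * k"
  show "\<forall>i\<in>K. N dvd (1 + t * alpha q t n (\<beta> i)) * k"
  proof
    fix i assume i: "i \<in> K"
    then obtain h where h: "h \<in> C (\<beta> i)" "eval_root (c i) h \<noteq> 0"
      using c irr_code_nonzero_imp_eval_root by blast
    moreover have "h \<in> S"
      using h(1) C_subset_S by blast
    ultimately have "N dvd h * k"
      using H eval_root_sum_on_C[OF cI i h(1)] by simp
    then show "N dvd (1 + t * alpha q t n (\<beta> i)) * k"
      using dvd_mult_iff_cyc_coset[OF coprime_q_N h(1)] by simp
  qed
next
  have cI: "\<forall>i\<in>K. c i \<in> I (\<beta> i)"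
    using c by blast
  assume H: "\<forall>i\<in>K. N dvd (1 + t * alpha q t n (\<beta> i)) * k"
  show "\<forall>h\<in>S. eval_root (\<Sum>i\<in>K. c i) h \<noteq> 0 \<longrightarrow> N dvd h * k"
  proof (intro ballI impI)
    fix h assume "h \<in> S" "eval_root (\<Sum>i\<in>K. c i) h \<noteq> 0"
    then obtain i where "i \<in> K" "h \<in> C (\<beta> i)"
      using eval_root_sum_off_C[OF cI] by blast
    then show "N dvd h * k"
      using H dvd_mult_iff_cyc_coset[OF coprime_q_N] by blast
  qed
qed

lemma rho_funpow_C_beta_eq_iff:
  assumes "x \<in> C_beta"
  shows "(\<rho> ^^ k) x = x \<longleftrightarrow> N div g dvd k"
proof -
  let ?a = "\<lambda>i. 1 + t * alpha q t n (\<beta> i)"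
  obtain c where x: "x = (\<Sum>i\<in>K. c i)" and c: "\<forall>i\<in>K. c i \<in> I (\<beta> i) - {0}"
    using assms by (auto simp: C_beta_def)
  have "(\<rho> ^^ k) x = x \<longleftrightarrow> (\<forall>h\<in>S. eval_root x h \<noteq> 0 \<longrightarrow> N dvd h * k)"
    using c unfolding x by (intro rho_funpow_eq_iff degree_sum_irr_code) auto
  also have "\<dots> \<longleftrightarrow> (\<forall>a\<in>?a ` K. N dvd a * k)"
    unfolding x support_dvd_iff[OF c] by simp
  also have "\<dots> \<longleftrightarrow> N div Gcd (insert N (?a ` K)) dvd k"
    by (rule dvd_all_mult_iff_dvd_div_Gcd[OF N_pos])
  also have "Gcd (insert N (?a ` K)) = Gcd (insert n (?a ` K))"
    using l_pos by (intro Gcd_insert_mult_coprime[of "?a 1"] coprime_1_plus_t) auto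
  also have "insert n (?a ` K) = ?a ` K \<union> {n}"
    by simp
  finally show ?thesis .
qed

lemma g_dvd_n: "g dvd n"
  by (rule Gcd_dvd) simp

lemma N_div_g_mult_g: "N div g * g = N"
  using g_dvd_n by simp

lemma N_div_g_pos: "0 < N div g"
proof (rule Nat.gr0I)
  assume "N div g = 0"
  then have "N = 0"
    using N_div_g_mult_g by (simp only: mult_0)
  with N_pos show False
    by simp
qed

end

theorem lemma3:
  fixes lam :: "'a::{field,finite}"
    and e :: "'a \<Rightarrow> 'b::{field,finite}"
    and \<zeta> :: 'b
    and q n t l :: nat
    and \<beta> :: "nat \<Rightarrow> nat"
  assumes q_def: "q = card (UNIV :: 'a set)"
    and n_pos: "0 < n"
    and coprime: "coprime n q"
    and lam_nz: "lam \<noteq> 0"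
    and t_def: "t = mult_order lam"
    and emb: "is_field_emb e"
    and zeta_root: "\<zeta> ^ (t * n) = 1"
    and zeta_prim: "\<forall>k. 0 < k \<and> k < t * n \<longrightarrow> \<zeta> ^ k \<noteq> 1"
    and zeta_n: "\<zeta> ^ n = e lam"
    and l_range: "1 \<le> l" "l \<le> s_idx q t n + 1"
    and beta_mono: "\<forall>i j. 1 \<le> i \<and> i < j \<and> j \<le> l \<longrightarrow> \<beta> i < \<beta> j"
    and beta_range: "\<forall>i. 1 \<le> i \<and> i \<le> l \<longrightarrow> \<beta> i \<le> s_idx q t n"
  shows "real (num_orbits (rho n lam)
            {(\<Sum>i=1..l. c i) | c. \<forall>i\<in>{1..l}. c i \<in> irr_code e q t n lam \<zeta> (\<beta> i) - {0}})
         = real ((\<Prod>i=1..l. q ^ d_dim q t n (\<beta> i) - 1)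
                 * Gcd ((\<lambda>i. 1 + t * alpha q t n (\<beta> i)) ` {1..l} \<union> {n}))
           / real (t * n)"
proof -
  interpret constacyclic_sum lam e \<zeta> q n t l \<beta>
    by unfold_locales (use assms in auto)
  have "card C_beta = num_orbits \<rho> C_beta * (t * n div g)"
    using rho_C_beta N_div_g_pos rho_funpow_C_beta_eq_iff finite_C_beta
    by (rule card_eq_num_orbits_mult)
  then have "card C_beta * g = num_orbits \<rho> C_beta * (t * n)"
    by (simp add: N_div_g_mult_g flip: mult.assoc)
  then have "real (card C_beta * g) / real (t * n) = real (num_orbits \<rho> C_beta)"
    using N_pos by simp
  then show ?thesis
    unfolding card_C_beta[symmetric] C_beta_def[symmetric] by (rule sym)
qed

end
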